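(* Let $\Gamma=\mathrm{Cay}(G,S)$ be a connected bipartite Cayley graph on $2n$ vertices with valency $k$, and let $H$ be the part of this bipartite graph containing the identity element (a normal subgroup of index $2$ in $G$). If $n$ is not divisible by $4$ and $0$ is not an eigenvalue of (the adjacency matrix of) $\Gamma$, then there is an involution $a\in G\setminus H$, so that $G=H\rtimes\langle a\rangle\cong H\rtimes\mathbb{Z}_2$.
   Context: For a finite group $G$ with identity $e$ and a subset $S\subseteq G\setminus\{e\}$ with $S=S^{-1}$, the Cayley graph $\mathrm{Cay}(G,S)$ has vertex set $G$, two vertices $a,b$ being adjacent iff $ab^{-1}\in S$. *)

theory Defs
  imports "HOL-Algebra.Algebra" "Jordan_Normal_Form.Char_Poly"
begin

definition cay_edge :: "('a, 'b) monoid_scheme \<Rightarrow> 'a set \<Rightarrow> 'a \<Rightarrow> 'a \<Rightarrow> bool" where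
  "cay_edge G S a b \<longleftrightarrow> a \<in> carrier G \<and> b \<in> carrier G \<and> a \<otimes>\<^bsub>G\<^esub> inv\<^bsub>G\<^esub> b \<in> S"

definition cayley_set :: "('a, 'b) monoid_scheme \<Rightarrow> 'a set \<Rightarrow> bool" where
  "cayley_set G S \<longleftrightarrow> S \<subseteq> carrier G - {\<one>\<^bsub>G\<^esub>} \<and> (\<forall>s\<in>S. inv\<^bsub>G\<^esub> s \<in> S)"

definition cayley_connected :: "('a, 'b) monoid_scheme \<Rightarrow> 'a set \<Rightarrow> bool" where
  "cayley_connected G S \<longleftrightarrow> (\<forall>x\<in>carrier G. \<forall>y\<in>carrier G. rtranclp (cay_edge G S) x y)"

definition cayley_bipartition :: "('a, 'b) monoid_scheme \<Rightarrow> 'a set \<Rightarrow> 'a set \<Rightarrow> bool" where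
  "cayley_bipartition G S P \<longleftrightarrow> P \<subseteq> carrier G \<and>
     (\<forall>u v. cay_edge G S u v \<longrightarrow> (u \<in> P \<longleftrightarrow> v \<notin> P))"

definition cay_adj_mat :: "('a, 'b) monoid_scheme \<Rightarrow> 'a set \<Rightarrow> (nat \<Rightarrow> 'a) \<Rightarrow> real mat" where
  "cay_adj_mat G S idx = mat (card (carrier G)) (card (carrier G))
     (\<lambda>(i, j). if cay_edge G S (idx i) (idx j) then 1 else 0)"

end

theory Submission
  imports Defs
begin

(*
  Both parts of the bipartition have n elements, and H is a subgroup of index two. Suppose
  that no involution lies outside H. Left multiplication turns H into a group of permutations
  of H, whose sign is a character sigma of H. A nontrivial involution w in H acts on H without
  fixed points, so sigma(w) = (-1)^(n/2) = -1 because n is not divisible by 4. For s in S, the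
  element of order two in <s> is such a w, and it is an odd power of s^2; hence
  sigma(s^2) = -1. Consequently the function that equals sigma on H and 0 off H is annihilated
  by the adjacency matrix: at a vertex x outside H, the neighbours s^-1 x and s x = s^2 (s^-1 x)
  contribute opposite values. So 0 is an eigenvalue.
*)

lemma sign_fixpoint_free_involution:
  assumes "finite A" "p permutes A"
    and "\<And>x. x \<in> A \<Longrightarrow> p x \<noteq> x" and "\<And>x. x \<in> A \<Longrightarrow> p (p x) = x"
  shows "even (card A) \<and> sign p = (-1) ^ (card A div 2)"
  using assms
proof (induction "card A" arbitrary: A p rule: less_induct)
  case less
  show ?case
  proof (cases "A = {}")
    case True
    then show ?thesis using less.prems(2) by simp
  next
    case False
    then obtain a where a: "a \<in> A" by blast
    define b where "b = p a"
    have b: "b \<in> A" "b \<noteq> a" "p b = a"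
      using permutes_in_image[OF less.prems(2)] a less.prems(3,4) b_def by auto
    define B where "B = A - {a, b}"
    define q where "q = transpose a b \<circ> p"
    have q_B: "q x = p x" "p x \<in> B" if "x \<in> B" for x
    proof -
      have "p x \<noteq> a" "p x \<noteq> b"
        using that less.prems(4) b by (metis B_def DiffE insertCI)+
      then show "q x = p x" "p x \<in> B"
        using that permutes_in_image[OF less.prems(2)] by (auto simp: q_def B_def)
    qed
    have "q permutes A"
      unfolding q_def by (rule permutes_compose[OF less.prems(2) permutes_swap_id[OF a b(1)]])
    moreover have "q a = a" "q b = b" using b by (auto simp: q_def b_def)
    ultimately have q: "q permutes B"
      by (rule_tac permutes_superset) (auto simp: B_def)
    have card_B: "card B = card A - 2" "card A \<ge> 2"
      using a b less.prems(1) card_mono[of A "{a, b}"] by (auto simp: B_def card_Diff_subset)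
    have IH: "even (card B) \<and> sign q = (-1) ^ (card B div 2)"
      using q_B less.prems(1,3,4) card_B
      by (intro less.hyps[OF _ _ q]) (auto simp: B_def)
    have "p = transpose a b \<circ> q" unfolding q_def by (simp add: comp_assoc[symmetric])
    moreover have "permutation q" using q less.prems(1) permutation_permutes B_def by blast
    ultimately have "sign p = - sign q"
      using b(2) by (simp add: sign_compose permutation_swap_id sign_swap_id)
    moreover have "card A div 2 = Suc (card B div 2)" "even (card A)" using card_B IH by auto
    ultimately show ?thesis using IH by simp
  qed
qed

context group
begin

definition left_mult_on :: "'a set \<Rightarrow> 'a \<Rightarrow> 'a \<Rightarrow> 'a" where
  "left_mult_on H g x = (if x \<in> H then g \<otimes> x else x)"

context
  fixes H :: "'a set"
  assumes subgroup_H: "subgroup H G"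
begin

interpretation H: subgroup H G by (rule subgroup_H)

lemma left_mult_on_mult:
  "g \<in> H \<Longrightarrow> h \<in> H \<Longrightarrow> left_mult_on H (g \<otimes> h) = left_mult_on H g \<circ> left_mult_on H h"
  by (simp add: fun_eq_iff left_mult_on_def m_assoc)

lemma left_mult_on_one: "left_mult_on H \<one> = id"
  by (simp add: fun_eq_iff left_mult_on_def)

lemma left_mult_on_permutes:
  assumes "g \<in> H"
  shows "left_mult_on H g permutes H"
proof (rule bij_imp_permutes)
  have "left_mult_on H x ` H \<subseteq> H" if "x \<in> H" for x
    using that by (auto simp: left_mult_on_def)
  moreover have "left_mult_on H g (left_mult_on H (inv g) x) = x"
    "left_mult_on H (inv g) (left_mult_on H g x) = x" for x
    using assms left_mult_on_mult[of g "inv g"] left_mult_on_mult[of "inv g" g]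
    by (simp_all add: left_mult_on_one fun_eq_iff)
  ultimately show "bij_betw (left_mult_on H g) H H"
    using assms by (intro bij_betw_byWitness[where f' = "left_mult_on H (inv g)"]) auto
qed (simp add: left_mult_on_def)

lemma sign_left_mult_on_mult:
  assumes "finite H" "g \<in> H" "h \<in> H"
  shows "sign (left_mult_on H (g \<otimes> h)) = sign (left_mult_on H g) * sign (left_mult_on H h)"
proof -
  have "permutation (left_mult_on H x)" if "x \<in> H" for x
    using assms(1) left_mult_on_permutes[OF that] permutation_permutes by blast
  then show ?thesis using assms by (simp add: left_mult_on_mult sign_compose)
qed

lemma sign_left_mult_on_pow:
  assumes "finite H" "g \<in> H"
  shows "sign (left_mult_on H (g [^] (j::nat))) = sign (left_mult_on H g) ^ j"
proof (induction j)
  case 0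
  then show ?case by (simp add: left_mult_on_one)
next
  case (Suc j)
  have "g [^] j \<in> H" by (induction j) (use assms in auto)
  then show ?case using Suc assms by (simp add: sign_left_mult_on_mult)
qed

text \<open>A nontrivial involution acts on H without fixed points.\<close>

lemma sign_left_mult_on_involution:
  assumes "finite H" "w \<in> H" "w \<otimes> w = \<one>" "w \<noteq> \<one>"
  shows "even (card H) \<and> sign (left_mult_on H w) = (-1) ^ (card H div 2)"
proof (rule sign_fixpoint_free_involution[OF assms(1) left_mult_on_permutes[OF assms(2)]])
  fix x assume "x \<in> H"
  then show "left_mult_on H w x \<noteq> x" "left_mult_on H w (left_mult_on H w x) = x"
    using assms by (simp_all add: left_mult_on_def m_assoc[symmetric])
qed

end

lemma cay_edge_mult_right:
  assumes "cay_edge G S u v" "y \<in> carrier G"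
  shows "cay_edge G S (u \<otimes> y) (v \<otimes> y)"
proof -
  have "u \<in> carrier G" "v \<in> carrier G" "u \<otimes> inv v \<in> S"
    using assms(1) by (auto simp: cay_edge_def)
  moreover from this have "u \<otimes> y \<otimes> inv (v \<otimes> y) = u \<otimes> inv v"
    using assms(2) by (simp add: inv_mult_group m_assoc) (simp add: m_assoc[symmetric])
  ultimately show ?thesis using assms(2) by (simp add: cay_edge_def)
qed

lemma cayley_bipartition_mult_right:
  assumes "cayley_bipartition G S P" "y \<in> carrier G"
  shows "cayley_bipartition G S {u \<in> carrier G. u \<otimes> y \<in> P}"
  using assms cay_edge_mult_right[OF _ assms(2)]
  unfolding cayley_bipartition_def by (auto simp: cay_edge_def)

text \<open>A connected graph has only one bipartition up to swapping the two parts.\<close>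

lemma cayley_bipartitions_agree:
  assumes "cayley_connected G S" "cayley_bipartition G S P" "cayley_bipartition G S Q"
    and "x \<in> carrier G" "y \<in> carrier G"
  shows "(x \<in> P \<longleftrightarrow> x \<in> Q) \<longleftrightarrow> (y \<in> P \<longleftrightarrow> y \<in> Q)"
proof -
  have "(cay_edge G S)\<^sup>*\<^sup>* x y" using assms by (simp add: cayley_connected_def)
  then show ?thesis
    by induction (use assms(2,3) in \<open>auto simp: cayley_bipartition_def\<close>)
qed

lemma cayley_bipartition_mult_iff:
  assumes "cayley_connected G S" "cayley_bipartition G S P" "\<one> \<in> P"
    and "x \<in> carrier G" "y \<in> carrier G"
  shows "x \<otimes> y \<in> P \<longleftrightarrow> (x \<in> P \<longleftrightarrow> y \<in> P)"
  using cayley_bipartitions_agree[OF assms(1) cayley_bipartition_mult_right[OF assms(2,5)]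
      assms(2) one_closed assms(4)] assms(3-5)
  by auto

lemma cay_adj_mat_mult_vec:
  assumes "cayley_set G S" "bij_betw idx {0..<card (carrier G)} (carrier G)"
    and "i < card (carrier G)"
  shows "(cay_adj_mat G S idx *\<^sub>v vec (card (carrier G)) (\<lambda>j. f (idx j))) $ i
           = (\<Sum>s\<in>S. f (inv s \<otimes> idx i))"
proof -
  let ?x = "idx i"
  have S: "S \<subseteq> carrier G" using assms(1) by (auto simp: cayley_set_def)
  have x: "?x \<in> carrier G" using assms(2,3) bij_betwE by fastforce
  have fin: "finite (carrier G)" using assms(2) bij_betw_finite by blast
  have "?x \<otimes> inv (inv s \<otimes> ?x) = s" if "s \<in> carrier G" for s
    using that x by (simp add: inv_mult_group m_assoc[symmetric])
  moreover have "inv (?x \<otimes> inv y) \<otimes> ?x = y" if "y \<in> carrier G" for y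
    using that x by (simp add: inv_mult_group m_assoc)
  ultimately have neighbours: "bij_betw (\<lambda>s. inv s \<otimes> ?x) S {y \<in> carrier G. cay_edge G S ?x y}"
    using S x by (intro bij_betw_byWitness[where f' = "\<lambda>y. ?x \<otimes> inv y"])
      (auto simp: cay_edge_def)
  have "(cay_adj_mat G S idx *\<^sub>v vec (card (carrier G)) (\<lambda>j. f (idx j))) $ i
          = (\<Sum>j = 0..<card (carrier G). if cay_edge G S ?x (idx j) then f (idx j) else 0)"
    using assms(3) by (auto simp: cay_adj_mat_def scalar_prod_def intro: sum.cong)
  also have "\<dots> = (\<Sum>y\<in>carrier G. if cay_edge G S ?x y then f y else 0)"
    by (rule sum.reindex_bij_betw[OF assms(2)])
  also have "\<dots> = (\<Sum>y\<in>{y \<in> carrier G. cay_edge G S ?x y}. f y)"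
    using fin by (simp add: sum.inter_filter)
  also have "\<dots> = (\<Sum>s\<in>S. f (inv s \<otimes> ?x))"
    by (rule sum.reindex_bij_betw[OF neighbours, symmetric])
  finally show ?thesis .
qed

end

locale bipartite_cayley_graph = group G for G (structure) and S H +
  assumes cayley_set: "cayley_set G S"
    and connected: "cayley_connected G S"
    and bipartition: "cayley_bipartition G S H"
    and one_in_part: "\<one> \<in> H"
begin

lemma part_subset: "H \<subseteq> carrier G"
  using bipartition by (simp add: cayley_bipartition_def)

lemma conn_set_subset: "S \<subseteq> carrier G - H"
proof
  fix s assume "s \<in> S"
  moreover from this have "s \<in> carrier G" "cay_edge G S s \<one>"
    using cayley_set by (auto simp: cayley_set_def cay_edge_def)
  ultimately show "s \<in> carrier G - H"
    using bipartition one_in_part by (auto simp: cayley_bipartition_def)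
qed

lemma conn_set_nonempty:
  assumes "carrier G \<noteq> {\<one>}"
  shows "S \<noteq> {}"
proof -
  obtain x where x: "x \<in> carrier G" "x \<noteq> \<one>" using assms one_closed by blast
  then have "(cay_edge G S)\<^sup>*\<^sup>* \<one> x" using connected by (simp add: cayley_connected_def)
  then obtain y where "cay_edge G S y x" using x(2) by (metis rtranclp.cases)
  then show ?thesis by (auto simp: cay_edge_def)
qed

lemma mult_in_part_iff:
  "x \<in> carrier G \<Longrightarrow> y \<in> carrier G \<Longrightarrow> x \<otimes> y \<in> H \<longleftrightarrow> (x \<in> H \<longleftrightarrow> y \<in> H)"
  using cayley_bipartition_mult_iff[OF connected bipartition one_in_part] .

lemma inv_in_part_iff: "x \<in> carrier G \<Longrightarrow> inv x \<in> H \<longleftrightarrow> x \<in> H"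
  using mult_in_part_iff[of x "inv x"] one_in_part by auto

lemma pow_in_part_iff:
  assumes "s \<in> carrier G - H"
  shows "s [^] (j::nat) \<in> H \<longleftrightarrow> even j"
  by (induction j) (use assms one_in_part mult_in_part_iff in auto)

lemma subgroup_part: "subgroup H G"
  using part_subset one_in_part mult_in_part_iff inv_in_part_iff
  by (intro subgroupI) blast+

lemma normal_part: "H \<lhd> G"
  unfolding normal_inv_iff
  using subgroup_part part_subset mult_in_part_iff inv_in_part_iff by auto

lemma part_mult_complement:
  assumes "a \<in> carrier G - H"
  shows "H <#> {\<one>, a} = carrier G"
proof
  show "H <#> {\<one>, a} \<subseteq> carrier G"
    using part_subset assms by (auto simp: set_mult_def)
next
  show "carrier G \<subseteq> H <#> {\<one>, a}"
  proof
    fix g assume g: "g \<in> carrier G"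
    then have "g = g \<otimes> \<one>" "g = g \<otimes> inv a \<otimes> a" "g \<notin> H \<Longrightarrow> g \<otimes> inv a \<in> H"
      using assms mult_in_part_iff inv_in_part_iff by (auto simp: m_assoc)
    then show "g \<in> H <#> {\<one>, a}"
      unfolding set_mult_def by (cases "g \<in> H") blast+
  qed
qed

lemma card_carrier_eq_double_part:
  assumes "finite (carrier G)" "a \<in> carrier G - H"
  shows "card (carrier G) = 2 * card H"
proof -
  have "bij_betw (\<lambda>x. x \<otimes> a) H (carrier G - H)"
    using assms part_subset mult_in_part_iff inv_in_part_iff
    by (intro bij_betw_byWitness[where f' = "\<lambda>y. y \<otimes> inv a"]) (auto simp: m_assoc)
  then have "card (carrier G - H) = card H" by (simp add: bij_betw_same_card)
  then show ?thesis
    using assms(1) part_subset card_Diff_subset[of H "carrier G"] card_mono[of "carrier G" H]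
      finite_subset[of H "carrier G"] by auto
qed

text \<open>
  The element of order two in the cyclic group generated by s is an odd power of \<open>s \<otimes> s\<close>.
\<close>

lemma sign_left_mult_on_square:
  assumes "finite (carrier G)" "\<not> 4 dvd card H"
    and no_involution: "\<forall>a\<in>carrier G - H. a \<otimes> a = \<one> \<longrightarrow> a = \<one>"
    and s: "s \<in> carrier G - H"
  shows "sign (left_mult_on H (s \<otimes> s)) = -1"
proof -
  have fin: "finite H" using assms(1) part_subset finite_subset by blast
  define d where "d = ord s"
  have "d \<ge> 1" using ord_ge_1[OF assms(1)] s by (simp add: d_def)
  have "even d" using pow_in_part_iff[OF s, of d] s one_in_part by (simp add: d_def)
  define w where "w = s [^] (d div 2)"
  have w: "w \<in> carrier G" using s by (simp add: w_def)
  have "w \<otimes> w = \<one>"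
    using s \<open>even d\<close> by (simp add: w_def d_def nat_pow_mult flip: mult_2)
  moreover have "w \<noteq> \<one>"
  proof -
    have "0 < d div 2" "d div 2 < d" using \<open>d \<ge> 1\<close> \<open>even d\<close> by (auto elim!: evenE)
    then show ?thesis
      using pow_eq_id[of s "d div 2"] s dvd_imp_le[of d "d div 2"] by (auto simp: w_def d_def)
  qed
  ultimately have "w \<in> H" "sign (left_mult_on H w) = -1"
    using w no_involution sign_left_mult_on_involution[OF subgroup_part fin] assms(2)
    by (auto simp: dvd_div_iff_mult)
  moreover have "w = (s \<otimes> s) [^] (d div 4)"
  proof -
    have "even (d div 2)" using \<open>w \<in> H\<close> pow_in_part_iff[OF s] by (simp add: w_def)
    then have "d div 2 = 2 * (d div 4)" by presburger
    then have "w = (s [^] (2::nat)) [^] (d div 4)" using s by (simp add: w_def nat_pow_pow)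
    then show ?thesis using s by (simp add: numeral_2_eq_2)
  qed
  ultimately have "sign (left_mult_on H (s \<otimes> s)) ^ (d div 4) = -1"
    using sign_left_mult_on_pow[OF subgroup_part fin] mult_in_part_iff s by auto
  then show ?thesis by (auto simp: sign_def split: if_splits)
qed

definition part_sign :: "'a \<Rightarrow> real" where
  "part_sign x = (if x \<in> H then of_int (sign (left_mult_on H x)) else 0)"

lemma sum_conn_set_part_sign:
  assumes "finite (carrier G)" "\<not> 4 dvd card H"
    and "\<forall>a\<in>carrier G - H. a \<otimes> a = \<one> \<longrightarrow> a = \<one>"
    and x: "x \<in> carrier G"
  shows "(\<Sum>s\<in>S. part_sign (inv s \<otimes> x)) = 0"
proof (cases "x \<in> H")
  case True
  then show ?thesis
    using conn_set_subset x mult_in_part_iff inv_in_part_iff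
    by (intro sum.neutral) (auto simp: part_sign_def)
next
  case False
  have fin: "finite H" using assms(1) part_subset finite_subset by blast
  have opposite: "part_sign (s \<otimes> x) = - part_sign (inv s \<otimes> x)" if "s \<in> S" for s
  proof -
    have s: "s \<in> carrier G - H" using that conn_set_subset by auto
    then have "s \<otimes> s \<in> H" "inv s \<otimes> x \<in> H" "s \<otimes> x \<in> H"
      using x False mult_in_part_iff inv_in_part_iff by auto
    moreover have "s \<otimes> x = (s \<otimes> s) \<otimes> (inv s \<otimes> x)"
      using s x by (simp add: m_assoc) (simp add: m_assoc[symmetric])
    ultimately show ?thesis
      using sign_left_mult_on_mult[OF subgroup_part fin] sign_left_mult_on_square[OF assms(1-3) s]
      by (simp add: part_sign_def)
  qed
  have "bij_betw (\<lambda>s. inv s) S S"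
    using cayley_set conn_set_subset
    by (intro bij_betw_byWitness[where f' = "\<lambda>s. inv s"]) (auto simp: cayley_set_def)
  then have "(\<Sum>s\<in>S. part_sign (inv s \<otimes> x)) = (\<Sum>s\<in>S. part_sign (s \<otimes> x))"
    by (rule sum.reindex_bij_betw[where g = "\<lambda>s. part_sign (s \<otimes> x)"])
  also have "\<dots> = - (\<Sum>s\<in>S. part_sign (inv s \<otimes> x))"
    using opposite by (simp add: sum_negf)
  finally show ?thesis by simp
qed

lemma eigenvalue_zero_if_no_involution_outside_part:
  assumes "bij_betw idx {0..<card (carrier G)} (carrier G)" "\<not> 4 dvd card H"
    and "\<forall>a\<in>carrier G - H. a \<otimes> a = \<one> \<longrightarrow> a = \<one>"
  shows "eigenvalue (cay_adj_mat G S idx) 0"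
proof -
  let ?N = "card (carrier G)"
  define v where "v = vec ?N (\<lambda>i. part_sign (idx i))"
  have fin: "finite (carrier G)" using assms(1) bij_betw_finite by blast
  have A: "cay_adj_mat G S idx \<in> carrier_mat ?N ?N" by (simp add: cay_adj_mat_def)
  have "cay_adj_mat G S idx *\<^sub>v v = 0 \<cdot>\<^sub>v v"
  proof (rule eq_vecI)
    fix i assume "i < dim_vec (0 \<cdot>\<^sub>v v)"
    then have i: "i < ?N" by (simp add: v_def)
    then have "idx i \<in> carrier G" using assms(1) bij_betwE by fastforce
    have "(cay_adj_mat G S idx *\<^sub>v v) $ i = (\<Sum>s\<in>S. part_sign (inv s \<otimes> idx i))"
      unfolding v_def by (rule cay_adj_mat_mult_vec[OF cayley_set assms(1) i])
    also have "\<dots> = 0"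
      by (rule sum_conn_set_part_sign[OF fin assms(2,3) \<open>idx i \<in> carrier G\<close>])
    finally show "(cay_adj_mat G S idx *\<^sub>v v) $ i = (0 \<cdot>\<^sub>v v) $ i"
      using i by (simp add: v_def)
  qed (use A in \<open>simp add: v_def\<close>)
  moreover have "v \<noteq> 0\<^sub>v ?N"
  proof -
    have "\<one> \<in> idx ` {0..<?N}" using assms(1) by (simp add: bij_betw_def)
    then obtain i where "i < ?N" "idx i = \<one>" by auto
    then have "v $ i = 1"
      using one_in_part by (simp add: v_def part_sign_def left_mult_on_one[OF subgroup_part])
    then show ?thesis using \<open>i < ?N\<close> by auto
  qed
  ultimately show ?thesis
    using A unfolding eigenvalue_def eigenvector_def by (intro exI[of _ v]) (simp add: v_def)
qed

end

theorem proposition3p5: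
  fixes G :: "('a, 'b) monoid_scheme" and S H :: "'a set" and n k :: nat and idx :: "nat \<Rightarrow> 'a"
  assumes "group G" and "finite (carrier G)"
    and "cayley_set G S"
    and "cayley_connected G S"
    and "cayley_bipartition G S H" and "\<one>\<^bsub>G\<^esub> \<in> H"
    and "card (carrier G) = 2 * n"
    and "card S = k"
    and "bij_betw idx {0..<card (carrier G)} (carrier G)"
    and "\<not> 4 dvd n"
    and "\<not> eigenvalue (cay_adj_mat G S idx) 0"
  shows "\<exists>a \<in> carrier G - H. a \<otimes>\<^bsub>G\<^esub> a = \<one>\<^bsub>G\<^esub> \<and> a \<noteq> \<one>\<^bsub>G\<^esub>
           \<and> H \<lhd> G \<and> H \<inter> {\<one>\<^bsub>G\<^esub>, a} = {\<one>\<^bsub>G\<^esub>}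
           \<and> H <#>\<^bsub>G\<^esub> {\<one>\<^bsub>G\<^esub>, a} = carrier G"
proof -
  interpret bipartite_cayley_graph G S H
    using assms(1,3-6) by (simp add: bipartite_cayley_graph_def bipartite_cayley_graph_axioms_def)
  have "carrier G \<noteq> {\<one>\<^bsub>G\<^esub>}" using assms(7) by auto
  then obtain s where "s \<in> carrier G - H" using conn_set_nonempty conn_set_subset by blast
  then have "card H = n" using card_carrier_eq_double_part assms(2,7) by simp
  then obtain a where "a \<in> carrier G - H" "a \<otimes>\<^bsub>G\<^esub> a = \<one>\<^bsub>G\<^esub>" "a \<noteq> \<one>\<^bsub>G\<^esub>"
    using eigenvalue_zero_if_no_involution_outside_part assms(9-11) by blast
  then show ?thesis using part_mult_complement normal_part one_in_part by auto
qed

end
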